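(* Let $F(z)=\sum_{k=0}^\infty b_k z^k\in\mathcal{B}$ and $0\le r\le 1/\sqrt3$. Then \[ \sum_{k=2}^\infty k|b_k|^2r^{2k}\le \frac{27}{8}r^4. \]
   Context: $\mathbb{D}$ denotes the open unit disc. $\mathcal{B}$ is the class of functions $F$ analytic in $\mathbb{D}$ satisfying $|F'(z)|\le \frac{1}{1-|z|^2}$ for all $z\in\mathbb{D}$. For $F\in\mathcal{B}$ we write its Taylor expansion as $F(z)=\sum_{k=0}^\infty b_k z^k$. *)

theory Defs
  imports "HOL-Complex_Analysis.Complex_Analysis"
begin

definition bloch_class :: "(complex \<Rightarrow> complex) set" where
  "bloch_class = {F. F holomorphic_on ball 0 1 \<and>
      (\<forall>z\<in>ball 0 1. norm (deriv F z) \<le> 1 / (1 - (norm z)\<^sup>2))}"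

definition taylor_coeff :: "(complex \<Rightarrow> complex) \<Rightarrow> nat \<Rightarrow> complex" where
  "taylor_coeff F k = (deriv ^^ k) F 0 / of_nat (fact k)"

end

theory Submission
  imports Defs
begin

text \<open>
  On the circle |z| = 1/sqrt 3 the Bloch bound gives |F'(z)| <= 3/2, so Bessel's inequality for
  F'(z) = sum (k+1) b_(k+1) z^k yields sum_(k>=1) k^2 |b_k|^2 3^(1-k) <= 9/4. For k >= 2 and
  r^2 <= 1/3 one has k r^(2k) <= (3/2) r^4 k^2 3^(1-k), and summing gives (3/2)(9/4) r^4 = 27/8 r^4.
\<close>

definition root_of_unity :: "nat \<Rightarrow> nat \<Rightarrow> complex" where
  "root_of_unity K j = exp (2 * of_real pi * \<i> * of_nat j / of_nat K)"

lemma root_of_unity_power: "root_of_unity K j ^ n = root_of_unity K (j * n)"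
  unfolding root_of_unity_def exp_of_nat_mult[symmetric] by (simp add: field_simps)

lemma norm_root_of_unity [simp]: "norm (root_of_unity K j) = 1"
  unfolding root_of_unity_def by (simp add: norm_exp_eq_Re)

lemma sum_root_of_unity_power:
  assumes "0 < K"
  shows "(\<Sum>j<K. root_of_unity K j ^ d) = (if K dvd d then of_nat K else 0)"
proof -
  have powers: "root_of_unity K j ^ d = root_of_unity K d ^ j" for j
    by (simp add: root_of_unity_power mult.commute)
  show ?thesis
  proof (cases "K dvd d")
    case True
    then have "root_of_unity K d = 1"
      using assms complex_root_unity_eq_1 by (simp add: root_of_unity_def)
    then show ?thesis using True by (simp add: powers)
  next
    case False
    then have "root_of_unity K d \<noteq> 1"
      using assms complex_root_unity_eq_1 by (simp add: root_of_unity_def)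
    moreover have "root_of_unity K d ^ K = 1"
      using assms complex_root_unity by (simp add: root_of_unity_def)
    ultimately show ?thesis using False by (simp add: powers geometric_sum)
  qed
qed

lemma sum_root_of_unity_orthogonal:
  assumes "n < K" "m < K"
  shows "(\<Sum>j<K. root_of_unity K j ^ n * cnj (root_of_unity K j ^ m)) = (if n = m then of_nat K else 0)"
proof -
  have orthogonal_of_le: "(\<Sum>j<K. root_of_unity K j ^ n * cnj (root_of_unity K j ^ m)) = (if n = m then of_nat K else 0)"
    if "m \<le> n" "n < K" for n m
  proof -
    have "root_of_unity K j ^ n * cnj (root_of_unity K j ^ m) = root_of_unity K j ^ (n - m)" for j
    proof -
      have "root_of_unity K j ^ m * cnj (root_of_unity K j ^ m) = 1"
        by (simp only: complex_norm_square[symmetric]) (simp add: norm_power)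
      then show ?thesis
        using \<open>m \<le> n\<close>
        by (metis (no_types, lifting) le_add_diff_inverse2 mult.assoc mult.right_neutral power_add)
    qed
    moreover have "K dvd n - m \<longleftrightarrow> n = m"
      using that by (auto dest: dvd_imp_le)
    ultimately show ?thesis using that by (simp add: sum_root_of_unity_power)
  qed
  show ?thesis
  proof (cases "m \<le> n")
    case True then show ?thesis using orthogonal_of_le assms by blast
  next
    case False
    then have "(\<Sum>j<K. root_of_unity K j ^ m * cnj (root_of_unity K j ^ n)) = 0"
      using orthogonal_of_le[of n m] assms by simp
    then have "cnj (\<Sum>j<K. root_of_unity K j ^ m * cnj (root_of_unity K j ^ n)) = 0" by simp
    then show ?thesis using False by (simp add: mult.commute)
  qed
qed

lemma discrete_parseval_roots_of_unity:
  assumes "0 < K"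
  shows "(\<Sum>j<K. (norm (\<Sum>n<K. c n * root_of_unity K j ^ n))\<^sup>2) = K * (\<Sum>n<K. (norm (c n))\<^sup>2)"
proof -
  define \<zeta> where "\<zeta> j = root_of_unity K j" for j
  have "complex_of_real (\<Sum>j<K. (norm (\<Sum>n<K. c n * \<zeta> j ^ n))\<^sup>2)
      = (\<Sum>j<K. \<Sum>n<K. \<Sum>m<K. c n * cnj (c m) * (\<zeta> j ^ n * cnj (\<zeta> j ^ m)))"
    unfolding of_real_sum complex_norm_square by (simp add: cnj_sum sum_product mult_ac)
  also have "\<dots> = (\<Sum>n<K. \<Sum>j<K. \<Sum>m<K. c n * cnj (c m) * (\<zeta> j ^ n * cnj (\<zeta> j ^ m)))"
    by (rule sum.swap)
  also have "\<dots> = (\<Sum>n<K. \<Sum>m<K. \<Sum>j<K. c n * cnj (c m) * (\<zeta> j ^ n * cnj (\<zeta> j ^ m)))"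
    by (intro sum.cong refl sum.swap)
  also have "\<dots> = (\<Sum>n<K. \<Sum>m<K. c n * cnj (c m) * (\<Sum>j<K. \<zeta> j ^ n * cnj (\<zeta> j ^ m)))"
    by (simp only: sum_distrib_left)
  also have "\<dots> = (\<Sum>n<K. \<Sum>m<K. c n * cnj (c m) * (if n = m then of_nat K else 0))"
    by (intro sum.cong refl) (simp add: \<zeta>_def sum_root_of_unity_orthogonal del: complex_cnj_power)
  also have "\<dots> = complex_of_real (K * (\<Sum>n<K. (norm (c n))\<^sup>2))"
    by (simp add: if_distrib complex_norm_square[symmetric] sum_distrib_left mult.commute cong: if_cong)
  finally show ?thesis by (simp only: of_real_eq_iff \<zeta>_def)
qed

lemma norm_sum_lessThan_le_norm_suminf_plus_tail:
  fixes f :: "nat \<Rightarrow> 'a::banach"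
  assumes "f sums s" and "summable (\<lambda>n. norm (f n))"
  shows "norm (\<Sum>n<K. f n) \<le> norm s + (\<Sum>n. norm (f (n + K)))"
proof -
  have tail_summable: "summable (\<lambda>n. norm (f (n + K)))"
    using assms(2) by (subst summable_iff_shift)
  have "s = (\<Sum>n. f (n + K)) + (\<Sum>n<K. f n)"
    using assms(1) suminf_split_initial_segment[of f K] by (simp add: sums_iff)
  then have "norm (\<Sum>n<K. f n) \<le> norm s + norm (\<Sum>n. f (n + K))"
    by (metis add_diff_cancel_left' norm_triangle_ineq4)
  also have "norm (\<Sum>n. f (n + K)) \<le> (\<Sum>n. norm (f (n + K)))"
    by (rule summable_norm[OF tail_summable])
  finally show ?thesis by simp
qed

text \<open>
  Bessel's inequality on a circle, without integration: the partial sums of degree \<open>< K\<close>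
  are sampled at the \<open>K\<close>-th roots of unity scaled to radius \<open>\<rho>\<close>, where the discrete Parseval
  identity is exact, and the truncation error vanishes as \<open>K \<rightarrow> \<infinity>\<close>.
\<close>
lemma power_series_coeff_square_sum_le:
  fixes a :: "nat \<Rightarrow> complex" and g :: "complex \<Rightarrow> complex"
  assumes sums: "\<And>w. norm w < R \<Longrightarrow> (\<lambda>n. a n * w ^ n) sums g w"
    and "0 < \<rho>" and "\<rho> < R"
    and bound: "\<And>w. norm w = \<rho> \<Longrightarrow> norm (g w) \<le> M"
  shows "(\<Sum>n<N. (norm (a n))\<^sup>2 * \<rho> ^ (2 * n)) \<le> M\<^sup>2"
proof -
  define tail where "tail K = (\<Sum>n. norm (a (n + K)) * \<rho> ^ (n + K))" for K
  have abs_summable: "summable (\<lambda>n. norm (a n) * \<rho> ^ n)"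
  proof -
    define \<rho>' where "\<rho>' = (\<rho> + R) / 2"
    have "\<rho> < \<rho>'" "\<rho>' < R"
      using \<open>\<rho> < R\<close> by (simp_all add: \<rho>'_def)
    then have "summable (\<lambda>n. a n * of_real \<rho>' ^ n)"
      using sums[of "of_real \<rho>'"] sums_summable \<open>0 < \<rho>\<close> \<open>\<rho> < \<rho>'\<close>
      unfolding norm_of_real by (metis abs_of_pos order.strict_trans)
    then have "summable (\<lambda>n. norm (a n * of_real \<rho> ^ n))"
      by (rule powser_insidea) (use \<open>0 < \<rho>\<close> \<open>\<rho> < \<rho>'\<close> in simp)
    then show ?thesis using \<open>0 < \<rho>\<close> by (simp add: norm_mult norm_power)
  qed
  then have "tail \<longlonglongrightarrow> 0"
    unfolding tail_def by (rule suminf_exist_split2)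
  then have "(\<lambda>K. (M + tail K)\<^sup>2) \<longlonglongrightarrow> (M + 0)\<^sup>2"
    by (intro tendsto_intros)
  then have "(\<lambda>K. (M + tail K)\<^sup>2) \<longlonglongrightarrow> M\<^sup>2"
    by simp
  moreover have "(\<Sum>n<N. (norm (a n))\<^sup>2 * \<rho> ^ (2 * n)) \<le> (M + tail K)\<^sup>2" if "N < K" for K
  proof -
    define z where "z j = of_real \<rho> * root_of_unity K j" for j
    have norm_z: "norm (z j) = \<rho>" for j
      using \<open>0 < \<rho>\<close> by (simp add: z_def norm_mult)
    have partial_sum_bound: "norm (\<Sum>n<K. a n * z j ^ n) \<le> M + tail K" for j
    proof -
      have "(\<lambda>n. a n * z j ^ n) sums g (z j)"
        using sums norm_z \<open>\<rho> < R\<close> by simp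
      moreover have "norm (a n * z j ^ n) = norm (a n) * \<rho> ^ n" for n
        by (simp add: norm_mult norm_power norm_z)
      ultimately have "norm (\<Sum>n<K. a n * z j ^ n) \<le> norm (g (z j)) + tail K"
        using norm_sum_lessThan_le_norm_suminf_plus_tail[of "\<lambda>n. a n * z j ^ n" "g (z j)" K]
          abs_summable by (simp add: tail_def)
      then show ?thesis
        using bound[OF norm_z[of j]] by linarith
    qed
    have "(norm (a n * of_real \<rho> ^ n))\<^sup>2 = (norm (a n))\<^sup>2 * \<rho> ^ (2 * n)" for n
      using \<open>0 < \<rho>\<close> by (simp add: norm_mult norm_power power_mult_distrib mult.commute flip: power_mult)
    then have "K * (\<Sum>n<K. (norm (a n))\<^sup>2 * \<rho> ^ (2 * n))
        = (\<Sum>j<K. (norm (\<Sum>n<K. (a n * of_real \<rho> ^ n) * root_of_unity K j ^ n))\<^sup>2)"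
      using discrete_parseval_roots_of_unity[of K "\<lambda>n. a n * of_real \<rho> ^ n"] \<open>N < K\<close> by simp
    also have "\<dots> = (\<Sum>j<K. (norm (\<Sum>n<K. a n * z j ^ n))\<^sup>2)"
      by (simp add: z_def power_mult_distrib mult.assoc)
    also have "\<dots> \<le> K * (M + tail K)\<^sup>2"
      using sum_mono[of "{..<K}" "\<lambda>j. (norm (\<Sum>n<K. a n * z j ^ n))\<^sup>2" "\<lambda>_. (M + tail K)\<^sup>2"]
        power_mono[OF partial_sum_bound norm_ge_zero] by simp
    finally have "(\<Sum>n<K. (norm (a n))\<^sup>2 * \<rho> ^ (2 * n)) \<le> (M + tail K)\<^sup>2"
      using \<open>N < K\<close> by simp
    moreover have "(\<Sum>n<N. (norm (a n))\<^sup>2 * \<rho> ^ (2 * n)) \<le> (\<Sum>n<K. (norm (a n))\<^sup>2 * \<rho> ^ (2 * n))"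
      using \<open>N < K\<close> by (intro sum_mono2) auto
    ultimately show ?thesis by linarith
  qed
  ultimately show ?thesis
    by (intro LIMSEQ_le_const[of "\<lambda>K. (M + tail K)\<^sup>2"]) (auto intro: exI[of _ "Suc N"])
qed

lemma taylor_coeff_Suc:
  "(deriv ^^ n) (deriv F) 0 / fact n = of_nat (Suc n) * taylor_coeff F (Suc n)"
proof -
  have "(deriv ^^ n) (deriv F) = (deriv ^^ Suc n) F"
    by (simp only: funpow_Suc_right o_def)
  moreover have "(fact (Suc n) :: complex) = of_nat (Suc n) * fact n"
    by (rule fact_Suc)
  ultimately show ?thesis
    unfolding taylor_coeff_def by (simp add: field_simps del: of_nat_Suc fact_Suc)
qed

lemma bloch_class_deriv_coeff_square_sum_le:
  assumes "F \<in> bloch_class"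
  shows "(\<Sum>k<N. (real (Suc k))\<^sup>2 * (norm (taylor_coeff F (Suc k)))\<^sup>2 * (1/3) ^ k) \<le> 9/4"
proof -
  have hol: "F holomorphic_on ball 0 1"
    and deriv_bound: "\<And>z. z \<in> ball 0 1 \<Longrightarrow> norm (deriv F z) \<le> 1 / (1 - (norm z)\<^sup>2)"
    using assms by (auto simp: bloch_class_def)
  have "deriv F holomorphic_on ball 0 1"
    using hol by (rule holomorphic_deriv) simp
  then have "(\<lambda>n. (deriv ^^ n) (deriv F) 0 / fact n * w ^ n) sums deriv F w" if "norm w < 1" for w
    using holomorphic_power_series[of "deriv F" 0 1 w] that by simp
  then have sums: "(\<lambda>n. (of_nat (Suc n) * taylor_coeff F (Suc n)) * w ^ n) sums deriv F w" if "norm w < 1" for w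
    using that by (simp only: taylor_coeff_Suc)
  define \<rho> :: real where "\<rho> = 1 / sqrt 3"
  have "\<rho>\<^sup>2 = 1/3" "0 < \<rho>" "\<rho> < 1"
    by (simp_all add: \<rho>_def power_divide)
  then have "norm (deriv F w) \<le> 3/2" if "norm w = \<rho>" for w
    using deriv_bound[of w] that by (simp add: \<open>\<rho>\<^sup>2 = 1/3\<close>)
  then have "(\<Sum>k<N. (norm (of_nat (Suc k) * taylor_coeff F (Suc k)))\<^sup>2 * \<rho> ^ (2 * k)) \<le> (3/2)\<^sup>2"
    using power_series_coeff_square_sum_le[OF sums] \<open>0 < \<rho>\<close> \<open>\<rho> < 1\<close> by blast
  moreover have "\<rho> ^ (2 * k) = (1/3) ^ k" for k
    by (simp only: power_mult \<open>\<rho>\<^sup>2 = 1/3\<close>)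
  ultimately show ?thesis
    by (simp add: norm_mult power_mult_distrib power_divide del: of_nat_Suc)
qed

lemma weight_le_square_weight:
  fixes r :: real
  assumes "0 \<le> r" and "r\<^sup>2 \<le> 1/3"
  shows "real (k + 2) * r ^ (2 * (k + 2)) \<le> 3/2 * r ^ 4 * ((real (k + 2))\<^sup>2 * (1/3) ^ (k + 1))"
proof -
  have "r ^ (2 * (k + 2)) = r ^ (4 + 2 * k)"
    by (rule arg_cong[of _ _ "power r"]) simp
  also have "\<dots> = r ^ 4 * (r\<^sup>2) ^ k"
    by (simp only: power_add power_mult)
  also have "\<dots> \<le> r ^ 4 * (1/3) ^ k"
    using assms by (intro mult_left_mono power_mono) auto
  finally have "real (k + 2) * r ^ (2 * (k + 2)) \<le> real (k + 2) * (3 * r ^ 4 * (1/3) ^ (k + 1))"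
    by (intro mult_left_mono) auto
  also have "\<dots> \<le> (real (k + 2))\<^sup>2 / 2 * (3 * r ^ 4 * (1/3) ^ (k + 1))"
  proof (intro mult_right_mono)
    have "real (k + 2) * 2 \<le> real (k + 2) * real (k + 2)"
      by (intro mult_left_mono) auto
    then show "real (k + 2) \<le> (real (k + 2))\<^sup>2 / 2"
      by (simp add: power2_eq_square)
  qed (use assms in auto)
  finally show ?thesis
    by (simp add: field_simps)
qed

lemma bloch_class_weighted_partial_sum_le:
  assumes "F \<in> bloch_class" and "0 \<le> r" and "r \<le> 1 / sqrt 3"
  shows "(\<Sum>k<n. real (k + 2) * (norm (taylor_coeff F (k + 2)))\<^sup>2 * r ^ (2 * (k + 2))) \<le> 27/8 * r ^ 4"
proof -
  define s where "s k = (real (Suc k))\<^sup>2 * (norm (taylor_coeff F (Suc k)))\<^sup>2 * (1/3) ^ k" for k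
  have "r\<^sup>2 \<le> (1 / sqrt 3)\<^sup>2"
    using assms(2,3) by (intro power_mono)
  then have "r\<^sup>2 \<le> 1/3"
    by (simp add: power_divide)
  then have term_le: "real (k + 2) * (norm (taylor_coeff F (k + 2)))\<^sup>2 * r ^ (2 * (k + 2))
      \<le> 3/2 * r ^ 4 * s (Suc k)" for k
    using mult_left_mono[OF weight_le_square_weight[OF assms(2)], of "(norm (taylor_coeff F (k + 2)))\<^sup>2"]
    by (simp add: s_def mult_ac)
  have "(\<Sum>k<n. s (Suc k)) \<le> (\<Sum>k<Suc n. s k)"
    unfolding sum.lessThan_Suc_shift by (simp add: s_def)
  then have s_bound: "(\<Sum>k<n. s (Suc k)) \<le> 9/4"
    using bloch_class_deriv_coeff_square_sum_le[OF assms(1), of "Suc n"] unfolding s_def by linarith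
  have "(\<Sum>k<n. real (k + 2) * (norm (taylor_coeff F (k + 2)))\<^sup>2 * r ^ (2 * (k + 2)))
      \<le> 3/2 * r ^ 4 * (\<Sum>k<n. s (Suc k))"
    unfolding sum_distrib_left by (intro sum_mono term_le)
  also have "\<dots> \<le> 3/2 * r ^ 4 * (9/4)"
    using s_bound assms(2) by (intro mult_left_mono) auto
  finally show ?thesis by simp
qed

theorem corollary2:
  fixes F :: "complex \<Rightarrow> complex" and r :: real
  assumes "F \<in> bloch_class" and "0 \<le> r" and "r \<le> 1 / sqrt 3"
  shows "summable (\<lambda>k. real (k + 2) * (norm (taylor_coeff F (k + 2)))\<^sup>2 * r ^ (2 * (k + 2)))
       \<and> (\<Sum>k. real (k + 2) * (norm (taylor_coeff F (k + 2)))\<^sup>2 * r ^ (2 * (k + 2))) \<le> 27 / 8 * r ^ 4"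
proof -
  define t where "t k = real (k + 2) * (norm (taylor_coeff F (k + 2)))\<^sup>2 * r ^ (2 * (k + 2))" for k
  have partial_sums: "(\<Sum>k<n. t k) \<le> 27/8 * r ^ 4" for n
    unfolding t_def using assms by (rule bloch_class_weighted_partial_sum_le)
  have "0 \<le> t k" for k
    using assms(2) by (simp add: t_def)
  then have "summable t"
    by (rule bounded_imp_summable[where B = "27/8 * r ^ 4"]) (metis partial_sums lessThan_Suc_atMost)
  moreover have "suminf t \<le> 27/8 * r ^ 4"
    using \<open>summable t\<close> partial_sums by (rule suminf_le_const)
  ultimately show ?thesis
    unfolding t_def[abs_def] by blast
qed

end
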